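(* Let $\alpha\in\mathbb{N}_0$. For every $y\in C^{(2\alpha+4)}[0,\infty)$, $$(-1)^{\alpha+1}e^x x\,D_x^{\alpha+2}\big\{e^{-x}D_x^{\alpha+2}[x^{\alpha+1}y(x)]\big\}=\sum_{i=1}^{2\alpha+4}d_i^{\alpha}(x)\,D_x^i y(x),$$ where $$d_i^{\alpha}(x)=\sum_{j=\max(1,\,i-\alpha-2)}^{\min(i,\alpha+2)}(-1)^{i+j+1}\binom{\alpha+1}{j-1}\binom{\alpha+2}{i-j}(i+1)_{\alpha+2-j}\,x^j.$$
   Context: $D_x^i$ denotes the $i$-fold derivative in $x$; $(a)_k=a(a+1)\cdots(a+k-1)$ is the Pochhammer symbol. *)

theory Defs
  imports "HOL-Analysis.Analysis"
begin

definition Dx :: "nat \<Rightarrow> (real \<Rightarrow> real) \<Rightarrow> real \<Rightarrow> real" where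
  "Dx i f = ((\<lambda>g x. vector_derivative g (at x within {0..})) ^^ i) f"

definition C_halfline :: "nat \<Rightarrow> (real \<Rightarrow> real) \<Rightarrow> bool" where
  "C_halfline k y \<longleftrightarrow>
     (\<forall>i<k. \<forall>x\<ge>0. (Dx i y has_vector_derivative Dx (Suc i) y x) (at x within {0..}))
     \<and> continuous_on {0..} (Dx k y)"

definition d_coeff :: "nat \<Rightarrow> nat \<Rightarrow> real \<Rightarrow> real" where
  "d_coeff \<alpha> i x = (\<Sum>j = max 1 (i - \<alpha> - 2) .. min i (\<alpha> + 2).
      (-1) ^ (i + j + 1) * real ((\<alpha> + 1) choose (j - 1)) * real ((\<alpha> + 2) choose (i - j))
      * pochhammer (real (i + 1)) (\<alpha> + 2 - j) * x ^ j)"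

end

theory Submission imports Defs begin

text \<open>Both differentiations are expanded by the Leibniz rule: the inner one with the derivatives
  i! C(\<alpha>+1,i) x^(\<alpha>+1-i) of x^(\<alpha>+1), the outer one with the derivatives (-1)^k e^(-x) of
  e^(-x). The factor e^x cancels, the extra factor x absorbs one power, and collecting the
  double sum by the order i of the derivative of y leaves the coefficients d_i^\<alpha>(x); the
  Pochhammer symbol arises as C(i+l,l) l! = (i+1)_l.\<close>

lemma Dx_0 [simp]: "Dx 0 f = f"
  by (simp add: Dx_def)

lemma Dx_Suc: "Dx (Suc i) f x = vector_derivative (Dx i f) (at x within {0..})"
  by (simp add: Dx_def)

lemma at_within_atLeast_nontrivial:
  fixes x :: real
  assumes "x \<ge> 0"
  shows "at x within {0..} \<noteq> bot"
proof -
  have "at_right x \<le> at x within {0..}"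
    by (rule at_le) (use assms in auto)
  then show ?thesis
    using trivial_limit_at_right_real bot_unique by metis
qed

definition halfline_jet :: "nat \<Rightarrow> (nat \<Rightarrow> real \<Rightarrow> real) \<Rightarrow> bool" where
  "halfline_jet n F \<longleftrightarrow>
     (\<forall>i<n. \<forall>x\<ge>0. (F i has_vector_derivative F (Suc i) x) (at x within {0..}))"

lemma C_halfline_imp_halfline_jet: "C_halfline n y \<Longrightarrow> halfline_jet n (\<lambda>i. Dx i y)"
  by (simp add: C_halfline_def halfline_jet_def)

lemma halfline_jet_shift: "halfline_jet (m + n) F \<Longrightarrow> halfline_jet n (\<lambda>i. F (m + i))"
  by (simp add: halfline_jet_def)

lemma Dx_eq_halfline_jet:
  assumes jet: "halfline_jet n F" and base: "\<And>t. t \<ge> 0 \<Longrightarrow> F 0 t = f t"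
    and "i \<le> n" "x \<ge> 0"
  shows "Dx i f x = F i x"
  using assms(3,4)
proof (induction i arbitrary: x)
  case 0
  then show ?case by (simp add: base)
next
  case (Suc i)
  have "(F i has_vector_derivative F (Suc i) x) (at x within {0..})"
    using jet Suc.prems unfolding halfline_jet_def by auto
  then have "(Dx i f has_vector_derivative F (Suc i) x) (at x within {0..})"
    by (rule has_vector_derivative_transform[rotated 2]) (use Suc in auto)
  then show ?case
    unfolding Dx_Suc using vector_derivative_within at_within_atLeast_nontrivial Suc.prems
    by blast
qed

lemma leibniz_sum_Suc:
  fixes a b :: "nat \<Rightarrow> 'a::comm_ring_1"
  shows "(\<Sum>k\<le>i. of_nat (i choose k) * (a (Suc k) * b (i - k) + a k * b (Suc (i - k))))
       = (\<Sum>k\<le>Suc i. of_nat (Suc i choose k) * a k * b (Suc i - k))"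
proof -
  have "(\<Sum>k\<le>i. of_nat (i choose k) * a k * b (Suc (i - k)))
      = (\<Sum>k\<le>Suc i. of_nat (i choose k) * a k * b (Suc i - k))"
    by (simp add: Suc_diff_le binomial_eq_0)
  also have "\<dots> = a 0 * b (Suc i) + (\<Sum>k\<le>i. of_nat (i choose Suc k) * a (Suc k) * b (i - k))"
    by (subst sum.atMost_Suc_shift) (simp del: sum.atMost_Suc)
  finally have "(\<Sum>k\<le>i. of_nat (i choose k) * a k * b (Suc (i - k)))
      = a 0 * b (Suc i) + (\<Sum>k\<le>i. of_nat (i choose Suc k) * a (Suc k) * b (i - k))" .
  moreover have "(\<Sum>k\<le>Suc i. of_nat (Suc i choose k) * a k * b (Suc i - k))
      = a 0 * b (Suc i) + (\<Sum>k\<le>i. of_nat (i choose k) * a (Suc k) * b (i - k))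
        + (\<Sum>k\<le>i. of_nat (i choose Suc k) * a (Suc k) * b (i - k))"
    by (subst sum.atMost_Suc_shift) (simp del: sum.atMost_Suc add: sum.distrib algebra_simps)
  ultimately show ?thesis
    by (simp add: sum.distrib algebra_simps)
qed

lemma halfline_jet_mult:
  assumes F: "halfline_jet n F" and G: "halfline_jet n G"
  shows "halfline_jet n (\<lambda>m x. \<Sum>k\<le>m. real (m choose k) * F k x * G (m - k) x)"
  unfolding halfline_jet_def
proof (intro allI impI)
  fix i x assume i: "i < n" and x: "(0::real) \<le> x"
  have "((\<lambda>x. \<Sum>k\<le>i. real (i choose k) * F k x * G (i - k) x) has_field_derivative
        (\<Sum>k\<le>i. real (i choose k) * (F (Suc k) x * G (i - k) x + F k x * G (Suc (i - k)) x)))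
        (at x within {0..})"
  proof (intro DERIV_sum)
    fix k assume "k \<in> {..i}"
    then have "(F k has_field_derivative F (Suc k) x) (at x within {0..})"
      and "(G (i - k) has_field_derivative G (Suc (i - k)) x) (at x within {0..})"
      using F G i x
      unfolding halfline_jet_def has_real_derivative_iff_has_vector_derivative by auto
    from DERIV_cmult[OF DERIV_mult[OF this], of "real (i choose k)"]
    show "((\<lambda>x. real (i choose k) * F k x * G (i - k) x) has_field_derivative
        real (i choose k) * (F (Suc k) x * G (i - k) x + F k x * G (Suc (i - k)) x))
        (at x within {0..})"
      by (simp add: algebra_simps)
  qed
  then show "((\<lambda>x. \<Sum>k\<le>i. real (i choose k) * F k x * G (i - k) x) has_vector_derivative
        (\<Sum>k\<le>Suc i. real (Suc i choose k) * F k x * G (Suc i - k) x)) (at x within {0..})"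
    unfolding has_real_derivative_iff_has_vector_derivative[symmetric]
    using leibniz_sum_Suc[of i "\<lambda>k. F k x" "\<lambda>k. G k x"] by simp
qed

lemma diff_times_binomial: "(n - k) * (n choose k) = Suc k * (n choose Suc k)"
  by (metis binomial_absorption binomial_absorb_comp)

lemma halfline_jet_power: "halfline_jet m (\<lambda>k x. fact k * real (n choose k) * x ^ (n - k))"
  unfolding halfline_jet_def
proof (intro allI impI)
  fix k and x :: real
  have "real (n - k) * real (n choose k) = real (Suc k) * real (n choose Suc k)"
    by (metis of_nat_mult diff_times_binomial)
  then have coeff: "fact k * real (n choose k) * real (n - k) = fact (Suc k) * real (n choose Suc k)"
    unfolding fact_Suc by (metis mult.assoc mult.commute)
  have "((\<lambda>x. fact k * real (n choose k) * x ^ (n - k)) has_field_derivative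
        fact k * real (n choose k) * (real (n - k) * x ^ (n - k - Suc 0))) (at x within {0..})"
    by (intro DERIV_cmult DERIV_pow)
  then show "((\<lambda>x. fact k * real (n choose k) * x ^ (n - k)) has_vector_derivative
        fact (Suc k) * real (n choose Suc k) * x ^ (n - Suc k)) (at x within {0..})"
    unfolding has_real_derivative_iff_has_vector_derivative[symmetric] diff_diff_left
    by (simp only: mult.assoc[symmetric] coeff Suc_eq_plus1 add_0)
qed

lemma halfline_jet_exp_minus: "halfline_jet n (\<lambda>k x. (-1) ^ k * exp (- x))"
  unfolding halfline_jet_def
proof (intro allI impI)
  fix i and x :: real
  have "((\<lambda>x. (-1) ^ i * exp (- x)) has_field_derivative (-1) ^ i * (exp (- x) * (- 1)))
        (at x within {0..})"
    by (intro DERIV_cmult DERIV_fun_exp derivative_intros)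
  then show "((\<lambda>x. (-1) ^ i * exp (- x)) has_vector_derivative (-1) ^ Suc i * exp (- x))
        (at x within {0..})"
    unfolding has_real_derivative_iff_has_vector_derivative[symmetric] by simp
qed

lemma binomial_times_fact_eq_pochhammer:
  "real ((n + l) choose l) * fact l = pochhammer (real n + 1) l"
  by (simp add: binomial_gbinomial gbinomial_pochhammer')

lemma sum_sum_diagonal:
  fixes g :: "nat \<Rightarrow> nat \<Rightarrow> 'a::comm_monoid_add"
  shows "(\<Sum>j=a..b. \<Sum>m\<le>c. g (j + m) j) = (\<Sum>i=a..b+c. \<Sum>j=max a (i - c)..min i b. g i j)"
proof -
  have "(\<Sum>(j, m)\<in>{a..b} \<times> {..c}. g (j + m) j)
      = (\<Sum>(i, j)\<in>Sigma {a..b+c} (\<lambda>i. {max a (i - c)..min i b}). g i j)"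
    by (rule sum.reindex_bij_witness[where i = "\<lambda>(i, j). (j, i - j)" and j = "\<lambda>(j, m). (j + m, j)"])
      auto
  then show ?thesis
    by (simp add: sum.cartesian_product sum.Sigma)
qed

lemma d_coeff_summand:
  fixes x :: real
  assumes j: "1 \<le> j" "j \<le> A + 2" and m: "m \<le> A + 2"
  shows "(-1) ^ (A + 1) * (-1) ^ (A + 2 - m) * real ((A + 2) choose m)
           * (real ((j + m + (A + 2 - j)) choose (A + 2 - j)) * fact (A + 2 - j))
           * real ((A + 1) choose (A + 2 - j)) * (x * x ^ (A + 1 - (A + 2 - j)))
       = (-1) ^ (j + m + j + 1) * real ((A + 1) choose (j - 1)) * real ((A + 2) choose (j + m - j))
           * pochhammer (real (j + m + 1)) (A + 2 - j) * x ^ j"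
proof -
  have "even ((A + 1) + (A + 2 - m) + (j + m + j + 1))"
    using m by presburger
  then have sign: "(-1::real) ^ (A + 1) * (-1) ^ (A + 2 - m) = (-1) ^ (j + m + j + 1)"
    unfolding power_add[symmetric] by (simp add: minus_one_power_iff)
  have "A + 1 - (j - 1) = A + 2 - j"
    using j by simp
  then have binom: "(A + 1) choose (A + 2 - j) = (A + 1) choose (j - 1)"
    using binomial_symmetric[of "j - 1" "A + 1"] j by simp
  have pow: "x * x ^ (A + 1 - (A + 2 - j)) = x ^ j"
    using j by (cases j) auto
  show ?thesis
    unfolding sign binomial_times_fact_eq_pochhammer binom pow
    by (simp add: add.commute[of 1])
qed

lemma d_coeff_expansion:
  fixes A :: nat and x :: real and Y :: "nat \<Rightarrow> real"
  shows "(-1) ^ (A + 1) * x * (\<Sum>k\<le>A + 2. real ((A + 2) choose k) * (-1) ^ k *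
           (\<Sum>l\<le>A + 2 + (A + 2 - k). real ((A + 2 + (A + 2 - k)) choose l)
              * (fact l * real ((A + 1) choose l) * x ^ (A + 1 - l)) * Y (A + 2 + (A + 2 - k) - l)))
       = (\<Sum>i = 1..2 * A + 4. d_coeff A i x * Y i)"
proof -
  define v where "v k l = (-1) ^ (A + 1) * x * (real ((A + 2) choose k) * (-1) ^ k *
    (real ((A + 2 + (A + 2 - k)) choose l) * (fact l * real ((A + 1) choose l) * x ^ (A + 1 - l))
     * Y (A + 2 + (A + 2 - k) - l)))" for k l
  define u where "u i j = (-1) ^ (i + j + 1) * real ((A + 1) choose (j - 1))
    * real ((A + 2) choose (i - j)) * pochhammer (real (i + 1)) (A + 2 - j) * x ^ j * Y i" for i j
  have "(-1) ^ (A + 1) * x * (\<Sum>k\<le>A + 2. real ((A + 2) choose k) * (-1) ^ k *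
           (\<Sum>l\<le>A + 2 + (A + 2 - k). real ((A + 2 + (A + 2 - k)) choose l)
              * (fact l * real ((A + 1) choose l) * x ^ (A + 1 - l)) * Y (A + 2 + (A + 2 - k) - l)))
      = (\<Sum>k\<le>A + 2. \<Sum>l\<le>A + 2 + (A + 2 - k). v k l)"
    by (simp only: v_def sum_distrib_left)
  also have "\<dots> = (\<Sum>k\<le>A + 2. \<Sum>l\<le>A + 1. v k l)"
    by (intro sum.cong refl sum.mono_neutral_right) (auto simp: v_def binomial_eq_0)
  also have "\<dots> = (\<Sum>(k, l)\<in>{..A + 2} \<times> {..A + 1}. v k l)"
    by (rule sum.cartesian_product)
  also have "\<dots> = (\<Sum>(j, m)\<in>{1..A + 2} \<times> {..A + 2}. v (A + 2 - m) (A + 2 - j))"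
    by (rule sum.reindex_bij_witness[where i = "\<lambda>(k, l). (A + 2 - l, A + 2 - k)"
          and j = "\<lambda>(j, m). (A + 2 - m, A + 2 - j)"]) auto
  also have "\<dots> = (\<Sum>j = 1..A + 2. \<Sum>m\<le>A + 2. u (j + m) j)"
    unfolding sum.cartesian_product[symmetric]
  proof (intro sum.cong refl)
    fix j m assume "j \<in> {1..A + 2}" "m \<in> {..A + 2}"
    then have j: "1 \<le> j" "j \<le> A + 2" and m: "m \<le> A + 2"
      by auto
    then have idx: "A + 2 - (A + 2 - m) = m" "A + 2 + m = j + m + (A + 2 - j)"
      "j + m + (A + 2 - j) - (A + 2 - j) = j + m" "(A + 2) choose (A + 2 - m) = (A + 2) choose m"
      by (auto simp: binomial_symmetric[symmetric])
    have "v (A + 2 - m) (A + 2 - j)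
        = (-1) ^ (A + 1) * (-1) ^ (A + 2 - m) * real ((A + 2) choose m)
           * (real ((j + m + (A + 2 - j)) choose (A + 2 - j)) * fact (A + 2 - j))
           * real ((A + 1) choose (A + 2 - j)) * (x * x ^ (A + 1 - (A + 2 - j))) * Y (j + m)"
      unfolding v_def idx by (simp only: mult_ac)
    also have "\<dots> = u (j + m) j"
      unfolding d_coeff_summand[OF j m] u_def ..
    finally show "v (A + 2 - m) (A + 2 - j) = u (j + m) j" .
  qed
  also have "\<dots> = (\<Sum>i = 1..A + 2 + (A + 2). \<Sum>j = max 1 (i - (A + 2))..min i (A + 2). u i j)"
    by (rule sum_sum_diagonal)
  also have "A + 2 + (A + 2) = 2 * A + 4"
    by simp
  also have "(\<Sum>i = 1..2 * A + 4. \<Sum>j = max 1 (i - (A + 2))..min i (A + 2). u i j)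
      = (\<Sum>i = 1..2 * A + 4. d_coeff A i x * Y i)"
    unfolding d_coeff_def u_def sum_distrib_right diff_diff_left[symmetric] ..
  finally show ?thesis .
qed

lemma Dx_exp_minus_Dx_power_mult:
  assumes y: "C_halfline (q + p) y" and "x \<ge> 0"
  shows "exp x * Dx p (\<lambda>t. exp (- t) * Dx q (\<lambda>s. s ^ n * y s) t) x
       = (\<Sum>k\<le>p. real (p choose k) * (-1) ^ k *
           (\<Sum>l\<le>q + (p - k). real ((q + (p - k)) choose l)
              * (fact l * real (n choose l) * x ^ (n - l)) * Dx (q + (p - k) - l) y x))"
proof -
  define P where "P m t = (\<Sum>k\<le>m. real (m choose k)
    * (fact k * real (n choose k) * t ^ (n - k)) * Dx (m - k) y t)" for m t
  have P_jet: "halfline_jet (q + p) P"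
    unfolding P_def using y
    by (intro halfline_jet_mult halfline_jet_power C_halfline_imp_halfline_jet)
  then have inner: "Dx q (\<lambda>s. s ^ n * y s) t = P q t" if "t \<ge> 0" for t
    by (rule Dx_eq_halfline_jet) (auto simp: P_def that)
  define R where "R m t = (\<Sum>k\<le>m. real (m choose k) * ((-1) ^ k * exp (- t)) * P (q + (m - k)) t)"
    for m t
  have "halfline_jet p R"
    unfolding R_def by (intro halfline_jet_mult halfline_jet_exp_minus halfline_jet_shift P_jet)
  then have "Dx p (\<lambda>t. exp (- t) * Dx q (\<lambda>s. s ^ n * y s) t) x = R p x"
  proof (rule Dx_eq_halfline_jet)
    fix t :: real assume "t \<ge> 0"
    show "R 0 t = exp (- t) * Dx q (\<lambda>s. s ^ n * y s) t"
      unfolding inner[OF \<open>t \<ge> 0\<close>] by (simp add: R_def)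
  qed (use \<open>x \<ge> 0\<close> in auto)
  also have "exp x * R p x = (\<Sum>k\<le>p. real (p choose k) * (-1) ^ k * P (q + (p - k)) x)"
    unfolding R_def sum_distrib_left by (intro sum.cong refl) (simp add: exp_minus field_simps)
  finally show ?thesis
    unfolding P_def .
qed

theorem corollary2p4:
  fixes \<alpha> :: nat and y :: "real \<Rightarrow> real"
  assumes "C_halfline (2 * \<alpha> + 4) y"
  shows "\<forall>x\<ge>0. (-1) ^ (\<alpha> + 1) * exp x * x *
            Dx (\<alpha> + 2) (\<lambda>t. exp (- t) * Dx (\<alpha> + 2) (\<lambda>s. s ^ (\<alpha> + 1) * y s) t) x
          = (\<Sum>i = 1 .. 2 * \<alpha> + 4. d_coeff \<alpha> i x * Dx i y x)"
proof (intro allI impI)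
  fix x :: real assume "x \<ge> 0"
  have "(\<alpha> + 2) + (\<alpha> + 2) = 2 * \<alpha> + 4"
    by simp
  with assms have y: "C_halfline ((\<alpha> + 2) + (\<alpha> + 2)) y"
    by (simp only:)
  have "(-1) ^ (\<alpha> + 1) * exp x * x *
      Dx (\<alpha> + 2) (\<lambda>t. exp (- t) * Dx (\<alpha> + 2) (\<lambda>s. s ^ (\<alpha> + 1) * y s) t) x
      = (-1) ^ (\<alpha> + 1) * x *
        (exp x * Dx (\<alpha> + 2) (\<lambda>t. exp (- t) * Dx (\<alpha> + 2) (\<lambda>s. s ^ (\<alpha> + 1) * y s) t) x)"
    by (simp only: mult_ac)
  also have "\<dots> = (\<Sum>i = 1 .. 2 * \<alpha> + 4. d_coeff \<alpha> i x * Dx i y x)"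
    unfolding Dx_exp_minus_Dx_power_mult[OF y \<open>x \<ge> 0\<close>] by (rule d_coeff_expansion)
  finally show "(-1) ^ (\<alpha> + 1) * exp x * x *
      Dx (\<alpha> + 2) (\<lambda>t. exp (- t) * Dx (\<alpha> + 2) (\<lambda>s. s ^ (\<alpha> + 1) * y s) t) x
      = (\<Sum>i = 1 .. 2 * \<alpha> + 4. d_coeff \<alpha> i x * Dx i y x)" .
qed

end
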